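(* Let $c \geq 1$ and let $\phi : (0,1) \rightarrow \mathbb{R}^+$ be a measurable function such that $$\frac{1}{|I|}\int_I \phi(x)\,dx \leq c \cdot \operatorname{ess\,inf}_{I}(\phi)$$ for every subinterval $I$ of $(0,1)$. Then the decreasing rearrangement $\phi^*$ of $\phi$ satisfies the same condition with the same constant $c$, i.e. $$\frac{1}{|I|}\int_I \phi^*(x)\,dx \leq c \cdot \operatorname{ess\,inf}_{I}(\phi^* )$$ for every subinterval $I$ of $(0,1)$.
   Context: $|\cdot|$ denotes Lebesgue measure on $\mathbb{R}$. The decreasing rearrangement of $\phi$ is defined for $t \in (0,1]$ by $$\phi^*(t) = \sup_{\substack{e \subset (0,1)\\ |e| \geq t}} \Big[\inf_{x \in e} \phi(x)\Big],$$ the supremum being over measurable sets $e$; $\phi^*$ is non-increasing, left continuous and equimeasurable with $\phi$. *)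

theory Defs
  imports "HOL-Analysis.Analysis"
begin

definition ess_inf_on :: "(real \<Rightarrow> real) \<Rightarrow> real set \<Rightarrow> ennreal" where
  "ess_inf_on f I = Sup {a :: ennreal. AE x in lebesgue. x \<in> I \<longrightarrow> a \<le> ennreal (f x)}"

definition decr_rearr :: "(real \<Rightarrow> real) \<Rightarrow> real \<Rightarrow> real" where
  "decr_rearr \<phi> t = Sup {Inf (\<phi> ` e) | e. e \<in> sets lebesgue \<and> e \<subseteq> {0<..<1}
                                      \<and> measure lebesgue e \<ge> t}"

definition A1_cond :: "real \<Rightarrow> (real \<Rightarrow> real) \<Rightarrow> bool" where
  "A1_cond c f \<longleftrightarrow> (\<forall>I. is_interval I \<and> I \<subseteq> {0<..<1} \<and> measure lebesgue I > 0 \<longrightarrow>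
      set_nn_integral lebesgue I (\<lambda>x. ennreal (f x)) / ennreal (measure lebesgue I)
        \<le> ennreal c * ess_inf_on f I)"

end

theory Submission
  imports Defs
begin

text \<open>
  Let \<open>\<mu> y = |{\<phi> > y}|\<close> be the distribution function of \<open>\<phi>\<close>. Cover \<open>{\<phi> > L}\<close>, up to small
  measure, by an open subset of \<open>(0,1)\<close> each of whose components has a closure point at which
  \<open>{\<phi> \<le> L}\<close> has positive measure nearby. Enlarging a component slightly around that point gives an
  interval on which the \<open>A\<^sub>1\<close> condition applies with essential infimum at most \<open>L\<close>. Summing over the
  components yields \<open>\<integral> \<phi> \<le> c L \<mu>(L)\<close> over \<open>{\<phi> > L}\<close> whenever \<open>L\<close> is at least the essential
  infimum of \<open>\<phi>\<close>, which by the layer cake formula reads \<open>L \<mu>(L) + \<integral>\<^sub>L\<^sup>\<infinity> \<mu> \<le> c L \<mu>(L)\<close>.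

  For an interval \<open>I\<close> with endpoints \<open>a < b\<close> take \<open>L = \<phi>\<^sup>*(b)\<close>: then \<open>\<phi>\<^sup>* \<ge> L\<close> on \<open>I\<close>,
  \<open>\<mu>(L) \<le> b\<close>, and for \<open>y \<ge> L\<close> the set \<open>{x \<in> I. \<phi>\<^sup>*(x) > y}\<close> lies in \<open>[a, \<mu>(y)]\<close>, whose length
  is at most \<open>(b - a)/b \<cdot> \<mu>(y)\<close>. The layer cake formula for \<open>\<phi>\<^sup>*\<close> on \<open>I\<close> then gives
  \<open>\<integral>\<^sub>I \<phi>\<^sup>* \<le> L (b - a) + (b - a)/b \<cdot> (c - 1) L b = c L |I|\<close>.
\<close>

lemma sigma_finite_lebesgue_real: "sigma_finite_measure (lebesgue :: real measure)"
  unfolding sigma_finite_measure_def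
proof (intro exI[of _ "range (\<lambda>n::nat. {-real n..real n})"] conjI)
  show "\<Union> (range (\<lambda>n::nat. {-real n..real n})) = space lebesgue"
  proof safe
    fix x :: real
    obtain n :: nat where "\<bar>x\<bar> \<le> real n" using real_arch_simple by blast
    then show "x \<in> \<Union> (range (\<lambda>n::nat. {-real n..real n}))" by (intro UN_I[of n]) auto
  qed auto
qed (auto simp: fmeasurable_def)

lemma set_nn_integral_layer_cake:
  fixes f :: "real \<Rightarrow> real"
  assumes f: "set_borel_measurable lebesgue A f" and nonneg: "\<And>x. x \<in> A \<Longrightarrow> 0 \<le> f x"
  shows "set_nn_integral lebesgue A (\<lambda>x. ennreal (f x))
           = (\<integral>\<^sup>+y. emeasure lebesgue {x\<in>A. 0 \<le> y \<and> y < f x} \<partial>lborel)"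
proof -
  interpret lebesgue: sigma_finite_measure "lebesgue :: real measure"
    by (rule sigma_finite_lebesgue_real)
  interpret pair_sigma_finite "lebesgue :: real measure" "lborel :: real measure" ..
  define g where "g = (\<lambda>x. indicator A x * f x)"
  have [measurable]: "g \<in> borel_measurable lebesgue"
    using f by (simp add: g_def set_borel_measurable_def)
  define H where "H = {p :: real \<times> real. 0 \<le> snd p \<and> snd p < g (fst p)}"
  have "Measurable.pred (lebesgue \<Otimes>\<^sub>M lborel) (\<lambda>p. 0 \<le> snd p \<and> snd p < g (fst p))"
    by measurable
  then have H[measurable]: "H \<in> sets (lebesgue \<Otimes>\<^sub>M lborel)"
    by (simp add: H_def pred_def space_pair_measure)
  have "set_nn_integral lebesgue A (\<lambda>x. ennreal (f x)) = (\<integral>\<^sup>+x. ennreal (g x) \<partial>lebesgue)"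
    by (intro nn_integral_cong) (auto simp: g_def indicator_def)
  also have "\<dots> = (\<integral>\<^sup>+x. (\<integral>\<^sup>+y. indicator H (x, y) \<partial>lborel) \<partial>lebesgue)"
  proof (intro nn_integral_cong)
    fix x
    have "(\<lambda>y. indicator H (x, y) :: ennreal) = indicator {0..<g x}"
      by (auto simp: H_def indicator_def)
    then show "ennreal (g x) = (\<integral>\<^sup>+y. indicator H (x, y) \<partial>lborel)"
      using nonneg by (auto simp: g_def indicator_def)
  qed
  also have "\<dots> = (\<integral>\<^sup>+y. (\<integral>\<^sup>+x. indicator H (x, y) \<partial>lebesgue) \<partial>lborel)"
    by (rule Fubini'[of "\<lambda>x y. indicator H (x, y)", symmetric]) measurable
  also have "\<dots> = (\<integral>\<^sup>+y. emeasure lebesgue {x\<in>A. 0 \<le> y \<and> y < f x} \<partial>lborel)"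
  proof (intro nn_integral_cong)
    fix y
    have eq: "(\<lambda>x. indicator H (x, y) :: ennreal) = indicator {x\<in>A. 0 \<le> y \<and> y < f x}"
      by (auto simp: H_def g_def indicator_def)
    have "{x\<in>A. 0 \<le> y \<and> y < f x} \<in> sets lebesgue"
    proof (cases "0 \<le> y")
      case True
      then have "{x\<in>A. 0 \<le> y \<and> y < f x} = {x \<in> space lebesgue. y < g x}"
        by (auto simp: g_def indicator_def)
      then show ?thesis
        using \<open>g \<in> borel_measurable lebesgue\<close> by (simp add: borel_measurable_iff_greater)
    qed simp
    then show "(\<integral>\<^sup>+x. indicator H (x, y) \<partial>lebesgue) = emeasure lebesgue {x\<in>A. 0 \<le> y \<and> y < f x}"
      unfolding eq by (rule nn_integral_indicator)
  qed
  finally show ?thesis .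
qed

lemma ess_inf_on_le:
  assumes "A \<in> sets lebesgue" "A \<subseteq> I" "emeasure lebesgue A \<noteq> 0" "\<And>x. x \<in> A \<Longrightarrow> f x \<le> L"
  shows "ess_inf_on f I \<le> ennreal L"
  unfolding ess_inf_on_def
proof (rule Sup_least, rule ccontr)
  fix a assume "a \<in> {a. AE x in lebesgue. x \<in> I \<longrightarrow> a \<le> ennreal (f x)}" and "\<not> a \<le> ennreal L"
  have "x \<notin> A" if "x \<in> I \<longrightarrow> a \<le> ennreal (f x)" for x
  proof
    assume "x \<in> A"
    then have "a \<le> ennreal L"
      using that assms(2,4) by (meson ennreal_leI order.trans subsetD)
    then show False
      using \<open>\<not> a \<le> ennreal L\<close> by simp
  qed
  with \<open>a \<in> _\<close> have "AE x in lebesgue. x \<notin> A"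
    by (auto elim: eventually_mono)
  then show False
    using assms(1,3) by (subst (asm) AE_iff_measurable[of A]) auto
qed

lemma ennreal_le_ess_inf_on: "(\<And>x. x \<in> I \<Longrightarrow> L \<le> f x) \<Longrightarrow> ennreal L \<le> ess_inf_on f I"
  unfolding ess_inf_on_def by (intro Sup_upper) (auto intro: ennreal_leI)

lemma set_borel_measurable_antimono_on:
  fixes f :: "real \<Rightarrow> real"
  assumes "antimono_on I f" "is_interval I"
  shows "set_borel_measurable lebesgue I f"
proof -
  have I: "I \<in> sets borel"
    using assms(2) by (rule real_interval_borel_measurable)
  have "mono_on I (\<lambda>x. - f x)"
    using assms(1) by (auto simp: monotone_on_def)
  then have "(\<lambda>x. - (- f x)) \<in> borel_measurable (restrict_space borel I)"
    by (intro borel_measurable_uminus borel_measurable_mono_on_fnc)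
  then have "(\<lambda>x. indicator I x *\<^sub>R f x) \<in> borel_measurable borel"
    using I by (simp add: borel_measurable_restrict_space_iff)
  then show ?thesis
    unfolding set_borel_measurable_def by (intro measurable_completion) simp
qed

lemma real_interval_Inf_Sup:
  fixes I :: "real set"
  assumes "is_interval I" "bounded I" "I \<noteq> {}"
  shows "{Inf I<..<Sup I} \<subseteq> I" "I \<subseteq> {Inf I..Sup I}"
proof -
  have bdd: "bdd_below I" "bdd_above I"
    using assms(2) by (auto simp: bounded_imp_bdd_below bounded_imp_bdd_above)
  then show "I \<subseteq> {Inf I..Sup I}"
    by (auto intro: cInf_lower cSup_upper)
  show "{Inf I<..<Sup I} \<subseteq> I"
  proof
    fix z assume "z \<in> {Inf I<..<Sup I}"
    then obtain u v where "u \<in> I" "u < z" "v \<in> I" "z < v"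
      using cInf_less_iff[OF assms(3) bdd(1)] less_cSup_iff[OF assms(3) bdd(2)] by auto
    then show "z \<in> I"
      using assms(1) unfolding is_interval_1 by (meson less_imp_le)
  qed
qed

lemma lmeasurable_bounded_interval: "is_interval (I :: real set) \<Longrightarrow> bounded I \<Longrightarrow> I \<in> lmeasurable"
  by (simp add: is_interval_convex measurable_convex)

lemma measure_real_interval:
  fixes I :: "real set"
  assumes "is_interval I" "bounded I" "I \<noteq> {}"
  shows "measure lebesgue I = Sup I - Inf I"
proof -
  have I: "I \<in> lmeasurable"
    using assms by (simp add: lmeasurable_bounded_interval)
  have le: "Inf I \<le> Sup I"
    using real_interval_Inf_Sup(2)[OF assms] assms(3) by auto
  have "measure lebesgue {Inf I<..<Sup I} \<le> measure lebesgue I"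
    using real_interval_Inf_Sup(1)[OF assms] I by (intro measure_mono_fmeasurable) auto
  moreover have "measure lebesgue I \<le> measure lebesgue {Inf I..Sup I}"
    using real_interval_Inf_Sup(2)[OF assms] I by (intro measure_mono_fmeasurable) auto
  ultimately show ?thesis
    using le by simp
qed

lemma ennreal_le_mult_epsilon:
  assumes "0 \<le> K" "\<And>e. 0 < e \<Longrightarrow> x \<le> ennreal K * (y + ennreal e)"
  shows "x \<le> ennreal K * y"
proof (rule ennreal_le_epsilon)
  fix e :: real assume "0 < e"
  then have "x \<le> ennreal K * (y + ennreal (e / (K + 1)))"
    using assms by simp
  also have "\<dots> = ennreal K * y + ennreal (K * (e / (K + 1)))"
    using assms(1) \<open>0 < e\<close> by (simp add: distrib_left ennreal_mult del: times_divide_eq_right)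
  also have "\<dots> \<le> ennreal K * y + ennreal e"
    using assms(1) \<open>0 < e\<close> by (intro add_left_mono ennreal_leI) (simp add: field_simps)
  finally show "x \<le> ennreal K * y + ennreal e" .
qed

lemma lmeasurable_unit_subinterval:
  assumes "is_interval (I :: real set)" "I \<subseteq> {0<..<1}"
  shows "I \<in> lmeasurable"
  using assms by (intro lmeasurable_bounded_interval) (auto intro: bounded_subset[OF bounded_Ioo])

lemma unit_subinterval_Inf_Sup:
  fixes I :: "real set"
  assumes "is_interval I" "I \<subseteq> {0<..<1}" "0 < measure lebesgue I"
  shows "0 \<le> Inf I" "Inf I < Sup I" "Sup I \<le> 1" "I \<subseteq> {Inf I..Sup I}"
    and "measure lebesgue I = Sup I - Inf I"
proof -
  have "I \<noteq> {}" "bounded I"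
    using assms(2,3) by (auto intro: bounded_subset[OF bounded_Ioo])
  then show "I \<subseteq> {Inf I..Sup I}" and m: "measure lebesgue I = Sup I - Inf I"
    using assms(1) by (auto simp: real_interval_Inf_Sup measure_real_interval)
  show "0 \<le> Inf I"
    using \<open>I \<noteq> {}\<close> assms(2) by (intro cInf_greatest) auto
  show "Sup I \<le> 1"
    using \<open>I \<noteq> {}\<close> assms(2) by (intro cSup_least) auto
  show "Inf I < Sup I"
    using assms(3) m by linarith
qed

definition locally_null_points :: "'a::euclidean_space set \<Rightarrow> 'a set" where
  "locally_null_points F = {x. \<exists>r>0. ball x r \<inter> F \<in> null_sets lebesgue}"

lemma open_locally_null_points: "open (locally_null_points F)"
  unfolding open_contains_ball
proof
  fix x assume "x \<in> locally_null_points F"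
  then obtain r where r: "r > 0" "ball x r \<inter> F \<in> null_sets lebesgue"
    by (auto simp: locally_null_points_def)
  have "ball x r \<subseteq> locally_null_points F"
  proof
    fix z assume z: "z \<in> ball x r"
    then have "ball z (r - dist x z) \<subseteq> ball x r"
      by (simp add: ball_subset_ball_iff dist_commute)
    then have "ball z (r - dist x z) \<inter> F \<subseteq> ball x r \<inter> F"
      by blast
    then have "ball z (r - dist x z) \<inter> F \<in> null_sets lebesgue"
      using r(2) by (rule null_sets_completion_subset)
    then show "z \<in> locally_null_points F"
      using z by (auto simp: locally_null_points_def intro!: exI[of _ "r - dist x z"])
  qed
  then show "\<exists>e>0. ball x e \<subseteq> locally_null_points F"
    using r(1) by blast
qed

lemma locally_null_points_Int_null: "locally_null_points F \<inter> F \<in> null_sets lebesgue"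
proof -
  define \<B> where "\<B> = {ball x r | x r. r > 0 \<and> ball x r \<inter> F \<in> null_sets lebesgue}"
  obtain \<B>' where \<B>': "\<B>' \<subseteq> \<B>" "countable \<B>'" "\<Union>\<B>' = \<Union>\<B>"
    by (rule Lindelof[of \<B>]) (auto simp: \<B>_def)
  have "locally_null_points F \<subseteq> \<Union>\<B>"
  proof
    fix x assume "x \<in> locally_null_points F"
    then obtain r where "r > 0" "ball x r \<inter> F \<in> null_sets lebesgue"
      by (auto simp: locally_null_points_def)
    then have "ball x r \<in> \<B>"
      by (auto simp: \<B>_def)
    then show "x \<in> \<Union>\<B>"
      using \<open>r > 0\<close> by (intro UnionI) auto
  qed
  then have "locally_null_points F \<inter> F \<subseteq> (\<Union>b\<in>\<B>'. b \<inter> F)"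
    using \<B>'(3) by blast
  moreover have "(\<Union>b\<in>\<B>'. b \<inter> F) \<in> null_sets lebesgue"
  proof (intro null_sets_UN' \<B>'(2))
    fix b assume "b \<in> \<B>'"
    then show "b \<inter> F \<in> null_sets lebesgue"
      using \<B>'(1) by (auto simp: \<B>_def)
  qed
  ultimately show ?thesis
    by (rule null_sets_completion_subset)
qed

lemma emeasure_open_eq_components:
  fixes W :: "'a::euclidean_space set"
  assumes "open W" "sets M = sets lebesgue"
  shows "emeasure M W = (\<integral>\<^sup>+C. emeasure M C \<partial>count_space (components W))"
proof -
  have "countable (components W)"
    using pairwise_disjoint_components[of W]
    by (intro countable_disjoint_open_subsets open_components[OF assms(1)])
      (auto simp: pairwise_def disjnt_def)
  moreover have "disjoint_family_on (\<lambda>C. C) (components W)"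
    using pairwise_disjoint_components[of W] by (auto simp: disjoint_family_on_def pairwise_def)
  moreover have "C \<in> sets M" if "C \<in> components W" for C
    using open_components[OF assms(1) that] assms(2) by simp
  ultimately have "emeasure M (\<Union>C\<in>components W. C) = (\<integral>\<^sup>+C. emeasure M C \<partial>count_space (components W))"
    by (intro emeasure_UN_countable) auto
  then show ?thesis
    by simp
qed

lemma closure_component_meets_complement:
  fixes W :: "'a::real_normed_vector set"
  assumes "connected S" "open W" "W \<subseteq> S" "C \<in> components W" "C \<noteq> S"
  obtains p where "p \<in> closure C" "p \<in> S" "p \<notin> W"
proof -
  have C: "open C" "connected C" "C \<subseteq> W" "C \<noteq> {}"
    using assms(2,4) open_components in_components_connected in_components_subset
      in_components_nonempty by blast+
  obtain p where p: "p \<in> closure C" "p \<in> S" "p \<notin> C"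
  proof -
    have "\<not> closure C \<inter> S \<subseteq> C"
    proof
      assume "closure C \<inter> S \<subseteq> C"
      then have "closedin (top_of_set S) C"
        using C(3) assms(3) closure_subset[of C] by (auto simp: closedin_closed intro!: exI[of _ "closure C"])
      moreover have "openin (top_of_set S) C"
        using C(1,3) assms(3) by (auto simp: openin_open intro!: exI[of _ C])
      ultimately show False
        using assms(1,5) C(4) unfolding connected_clopen by blast
    qed
    then show ?thesis
      using that by blast
  qed
  have "p \<notin> W"
  proof
    assume "p \<in> W"
    have "connected (insert p C)"
      using p(1) closure_subset[of C] by (intro connected_intermediate_closure[OF C(2)]) auto
    moreover have maximal: "\<And>D. D \<noteq> {} \<Longrightarrow> C \<subseteq> D \<Longrightarrow> D \<subseteq> W \<Longrightarrow> connected D \<Longrightarrow> D = C"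
      using assms(4) by (simp add: in_components_maximal)
    ultimately have "insert p C = C"
      using \<open>p \<in> W\<close> C(3) by (intro maximal) auto
    then show False
      using p(3) by blast
  qed
  then show ?thesis
    using that p by blast
qed

locale positive_weight_on_unit_interval =
  fixes \<phi> :: "real \<Rightarrow> real"
  assumes measurable_weight: "set_borel_measurable lebesgue {0<..<1} \<phi>"
    and positive: "\<And>x. x \<in> {0<..<1} \<Longrightarrow> 0 < \<phi> x"
begin

definition superlevel :: "real \<Rightarrow> real set" where
  "superlevel y = {x\<in>{0<..<1}. y < \<phi> x}"

definition sublevel :: "real \<Rightarrow> real set" where
  "sublevel y = {x\<in>{0<..<1}. \<phi> x \<le> y}"

definition \<mu> :: "real \<Rightarrow> real" where
  "\<mu> y = measure lebesgue (superlevel y)"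

lemma superlevel_subset: "superlevel y \<subseteq> {0<..<1}"
  by (auto simp: superlevel_def)

lemma superlevel_lmeasurable: "superlevel y \<in> lmeasurable"
proof -
  have "(\<lambda>x. indicator {0<..<1} x * \<phi> x) \<in> borel_measurable lebesgue"
    using measurable_weight by (simp add: set_borel_measurable_def)
  then have "{x \<in> space lebesgue. y < indicator {0<..<1} x * \<phi> x} \<in> sets lebesgue"
    by (simp add: borel_measurable_iff_greater)
  moreover have "superlevel y = {0<..<1} \<inter> {x \<in> space lebesgue. y < indicator {0<..<1} x * \<phi> x}"
    by (auto simp: superlevel_def)
  ultimately have "superlevel y \<in> sets lebesgue"
    by auto
  then show ?thesis
    by (rule bounded_set_imp_lmeasurable[rotated])
      (rule bounded_subset[OF bounded_Ioo superlevel_subset])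
qed

lemma sublevel_eq: "sublevel y = {0<..<1} - superlevel y"
  by (auto simp: sublevel_def superlevel_def)

lemma sublevel_lmeasurable: "sublevel y \<in> lmeasurable"
  unfolding sublevel_eq using superlevel_lmeasurable by auto

lemma emeasure_superlevel: "emeasure lebesgue (superlevel y) = ennreal (\<mu> y)"
  using superlevel_lmeasurable by (simp add: \<mu>_def emeasure_eq_measure2)

lemma measure_sublevel: "measure lebesgue (sublevel y) = 1 - \<mu> y"
  using superlevel_lmeasurable superlevel_subset by (simp add: sublevel_eq \<mu>_def measure_Diff)

lemma \<mu>_nonneg: "0 \<le> \<mu> y"
  by (simp add: \<mu>_def)

lemma superlevel_antimono: "y \<le> z \<Longrightarrow> superlevel z \<subseteq> superlevel y"
  by (auto simp: superlevel_def)

lemma \<mu>_antimono: "y \<le> z \<Longrightarrow> \<mu> z \<le> \<mu> y"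
  unfolding \<mu>_def using superlevel_lmeasurable
  by (intro measure_mono_fmeasurable superlevel_antimono) auto

lemma \<mu>_small: "0 < t \<Longrightarrow> \<exists>y. \<mu> y < t"
proof -
  assume "0 < t"
  have "(\<lambda>n. \<mu> (real n)) \<longlonglongrightarrow> measure lebesgue (\<Inter>n. superlevel (real n))"
    unfolding \<mu>_def
  proof (rule Lim_measure_decseq)
    show "decseq (\<lambda>n. superlevel (real n))"
      by (intro monotoneI superlevel_antimono) simp
  qed (use superlevel_lmeasurable emeasure_superlevel in auto)
  moreover have "(\<Inter>n. superlevel (real n)) = {}"
  proof (intro equals0I)
    fix x assume "x \<in> (\<Inter>n. superlevel (real n))"
    moreover obtain n :: nat where "\<phi> x \<le> real n"
      using real_arch_simple by blast
    ultimately show False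
      by (auto simp: superlevel_def dest: spec[of _ n])
  qed
  ultimately have "(\<lambda>n. \<mu> (real n)) \<longlonglongrightarrow> 0"
    by simp
  then have "eventually (\<lambda>n. \<mu> (real n) < t) sequentially"
    using \<open>0 < t\<close> by (rule order_tendstoD)
  then show ?thesis
    by (auto simp: eventually_sequentially)
qed

lemma Union_superlevel_shifted: "(\<Union>n. superlevel (y + 1 / real (Suc n))) = superlevel y"
proof (intro equalityI subsetI)
  fix x assume "x \<in> (\<Union>n. superlevel (y + 1 / real (Suc n)))"
  then obtain n where "x \<in> {0<..<1}" "y + 1 / real (Suc n) < \<phi> x"
    by (auto simp: superlevel_def)
  moreover have "0 < 1 / real (Suc n)"
    by simp
  ultimately have "y < \<phi> x"
    by linarith
  with \<open>x \<in> {0<..<1}\<close> show "x \<in> superlevel y"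
    by (simp add: superlevel_def)
next
  fix x assume "x \<in> superlevel y"
  then have "0 < \<phi> x - y"
    by (simp add: superlevel_def)
  then obtain n where "1 / real (Suc n) < \<phi> x - y"
    by (rule nat_approx_posE)
  then have "x \<in> superlevel (y + 1 / real (Suc n))"
    using \<open>x \<in> superlevel y\<close> by (auto simp: superlevel_def)
  then show "x \<in> (\<Union>n. superlevel (y + 1 / real (Suc n)))"
    by blast
qed

lemma \<mu>_right_continuous:
  assumes "t < \<mu> y"
  obtains z where "y < z" "t < \<mu> z"
proof -
  let ?z = "\<lambda>n::nat. y + 1 / real (Suc n)"
  have inc: "incseq (\<lambda>n. superlevel (?z n))"
    by (intro monotoneI superlevel_antimono) (simp add: frac_le)
  have "(\<lambda>n. \<mu> (?z n)) \<longlonglongrightarrow> measure lebesgue (\<Union>n. superlevel (?z n))"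
    unfolding \<mu>_def
  proof (rule Lim_measure_incseq)
    show "emeasure lebesgue (\<Union>n. superlevel (?z n)) \<noteq> \<infinity>"
      unfolding Union_superlevel_shifted emeasure_superlevel by simp
  qed (use inc superlevel_lmeasurable in auto)
  then have "(\<lambda>n. \<mu> (?z n)) \<longlonglongrightarrow> \<mu> y"
    unfolding Union_superlevel_shifted \<mu>_def .
  then have "eventually (\<lambda>n. t < \<mu> (?z n)) sequentially"
    using assms by (rule order_tendstoD)
  then obtain n where "t < \<mu> (?z n)"
    by (auto simp: eventually_sequentially)
  then show ?thesis
    using that[of "?z n"] by simp
qed

definition rearr_candidates :: "real \<Rightarrow> real set" where
  "rearr_candidates t = {Inf (\<phi> ` e) | e. e \<in> sets lebesgue \<and> e \<subseteq> {0<..<1} \<and> measure lebesgue e \<ge> t}"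

lemma decr_rearr_eq_Sup: "decr_rearr \<phi> t = Sup (rearr_candidates t)"
  by (simp add: decr_rearr_def rearr_candidates_def)

lemma rearr_candidates_nonempty: "t \<le> 1 \<Longrightarrow> rearr_candidates t \<noteq> {}"
  by (auto simp: rearr_candidates_def)

lemma bdd_below_image:
  assumes "e \<subseteq> {0<..<1}"
  shows "bdd_below (\<phi> ` e)"
proof (rule bdd_belowI)
  fix v assume "v \<in> \<phi> ` e"
  then obtain x where "x \<in> e" "v = \<phi> x"
    by blast
  then show "0 \<le> v"
    using assms positive[of x] by auto
qed

lemma measure_le_\<mu>_if_less_Inf:
  assumes "e \<in> sets lebesgue" "e \<subseteq> {0<..<1}" "y < Inf (\<phi> ` e)"
  shows "measure lebesgue e \<le> \<mu> y"
proof -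
  have "bdd_below (\<phi> ` e)"
    using assms(2) by (rule bdd_below_image)
  then have "e \<subseteq> superlevel y"
    using assms(2,3) by (auto simp: superlevel_def intro: order.strict_trans2 cInf_lower)
  then show ?thesis
    unfolding \<mu>_def using assms(1) superlevel_lmeasurable by (intro measure_mono_fmeasurable) auto
qed

lemma bdd_above_rearr_candidates:
  assumes "0 < t"
  shows "bdd_above (rearr_candidates t)"
proof -
  obtain y where y: "\<mu> y < t"
    using \<mu>_small assms by blast
  show ?thesis
  proof (rule bdd_aboveI)
    fix v assume "v \<in> rearr_candidates t"
    then obtain e where e: "e \<in> sets lebesgue" "e \<subseteq> {0<..<1}" "t \<le> measure lebesgue e" "v = Inf (\<phi> ` e)"
      by (auto simp: rearr_candidates_def)
    show "v \<le> y"
    proof (rule ccontr)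
      assume "\<not> v \<le> y"
      then have "measure lebesgue e \<le> \<mu> y"
        using e by (intro measure_le_\<mu>_if_less_Inf) auto
      then show False
        using e(3) y by linarith
    qed
  qed
qed

lemma Inf_image_le_decr_rearr:
  assumes "e \<in> sets lebesgue" "e \<subseteq> {0<..<1}" "t \<le> measure lebesgue e" "0 < t"
  shows "Inf (\<phi> ` e) \<le> decr_rearr \<phi> t"
  unfolding decr_rearr_eq_Sup using assms bdd_above_rearr_candidates[OF assms(4)]
  by (intro cSup_upper) (auto simp: rearr_candidates_def)

lemma le_decr_rearr:
  assumes "0 < t" "t \<le> \<mu> y"
  shows "y \<le> decr_rearr \<phi> t"
proof -
  have "superlevel y \<noteq> {}"
    using assms by (auto simp: \<mu>_def)
  then have "y \<le> Inf (\<phi> ` superlevel y)"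
    by (intro cInf_greatest) (auto simp: superlevel_def)
  also have "\<dots> \<le> decr_rearr \<phi> t"
    using assms superlevel_lmeasurable superlevel_subset
    by (intro Inf_image_le_decr_rearr) (auto simp: \<mu>_def)
  finally show ?thesis .
qed

lemma less_decr_rearr:
  assumes "0 < t" "t < \<mu> y"
  shows "y < decr_rearr \<phi> t"
proof -
  obtain z where "y < z" "t < \<mu> z"
    using assms(2) by (rule \<mu>_right_continuous)
  then show ?thesis
    using le_decr_rearr[OF assms(1), of z] by simp
qed

lemma le_\<mu>_if_less_decr_rearr:
  assumes "0 < t" "t \<le> 1" "y < decr_rearr \<phi> t"
  shows "t \<le> \<mu> y"
proof -
  obtain v where "v \<in> rearr_candidates t" "y < v"
    using assms rearr_candidates_nonempty bdd_above_rearr_candidates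
    by (auto simp: decr_rearr_eq_Sup less_cSup_iff)
  then obtain e where "e \<in> sets lebesgue" "e \<subseteq> {0<..<1}" "t \<le> measure lebesgue e" "y < Inf (\<phi> ` e)"
    by (auto simp: rearr_candidates_def)
  then show ?thesis
    using measure_le_\<mu>_if_less_Inf[of e y] by linarith
qed

lemma \<mu>_decr_rearr_le:
  assumes "0 < t"
  shows "\<mu> (decr_rearr \<phi> t) \<le> t"
proof (rule ccontr)
  assume "\<not> \<mu> (decr_rearr \<phi> t) \<le> t"
  then have "decr_rearr \<phi> t < decr_rearr \<phi> t"
    using assms by (intro less_decr_rearr) auto
  then show False
    by simp
qed

lemma decr_rearr_nonneg:
  assumes "0 < t" "t \<le> 1"
  shows "0 \<le> decr_rearr \<phi> t"
proof -
  have "superlevel 0 = {0<..<1}"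
    using positive by (auto simp: superlevel_def)
  then show ?thesis
    using assms by (intro le_decr_rearr) (auto simp: \<mu>_def)
qed

lemma decr_rearr_antimono:
  assumes "0 < s" "s \<le> t" "t \<le> 1"
  shows "decr_rearr \<phi> t \<le> decr_rearr \<phi> s"
  unfolding decr_rearr_eq_Sup using assms rearr_candidates_nonempty bdd_above_rearr_candidates[of s]
  by (intro cSup_subset_mono) (auto simp: rearr_candidates_def)

lemma ess_inf_le_decr_rearr:
  assumes "0 < t" "t \<le> 1"
  shows "ess_inf_on \<phi> {0<..<1} \<le> ennreal (decr_rearr \<phi> t)"
proof (rule ennreal_le_epsilon)
  fix e :: real assume "0 < e"
  then have "\<not> t \<le> \<mu> (decr_rearr \<phi> t + e)"
    using le_decr_rearr[OF assms(1), of "decr_rearr \<phi> t + e"] by linarith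
  then have "\<mu> (decr_rearr \<phi> t + e) < 1"
    using assms(2) by linarith
  then have pos: "emeasure lebesgue (sublevel (decr_rearr \<phi> t + e)) \<noteq> 0"
    using sublevel_lmeasurable measure_sublevel by (auto simp: emeasure_eq_measure2)
  have "ess_inf_on \<phi> {0<..<1} \<le> ennreal (decr_rearr \<phi> t + e)"
    by (rule ess_inf_on_le[OF fmeasurableD[OF sublevel_lmeasurable] _ pos]) (auto simp: sublevel_def)
  then show "ess_inf_on \<phi> {0<..<1} \<le> ennreal (decr_rearr \<phi> t) + ennreal e"
    using decr_rearr_nonneg[OF assms] \<open>0 < e\<close> by (simp add: ennreal_plus)
qed

text \<open>Adding the points near which \<open>{\<phi> \<le> L}\<close> is null costs no measure, since they meet
  \<open>{\<phi> \<le> L}\<close> in a null set.\<close>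
lemma superlevel_open_cover:
  assumes "0 < e"
  obtains W where "open W" "locally_null_points (sublevel L) \<inter> {0<..<1} \<subseteq> W" "W \<subseteq> {0<..<1}"
    "superlevel L \<subseteq> W" "emeasure lebesgue W \<le> emeasure lebesgue (superlevel L) + ennreal e"
proof -
  define U where "U = locally_null_points (sublevel L) \<inter> {0<..<1}"
  define G where "G = superlevel L"
  have G: "G \<in> sets lebesgue"
    using superlevel_lmeasurable by (auto simp: G_def)
  have "open U"
    by (simp add: U_def open_Int open_locally_null_points)
  then have U: "U \<in> sets lebesgue"
    by simp
  have "G \<union> U = G \<union> (locally_null_points (sublevel L) \<inter> sublevel L)"
    by (auto simp: U_def G_def superlevel_def sublevel_def)
  then have emGU: "emeasure lebesgue (G \<union> U) = emeasure lebesgue G"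
    using emeasure_Un_null_set[OF G locally_null_points_Int_null] by simp
  obtain T where T: "open T" "G \<union> U \<subseteq> T" "T - (G \<union> U) \<in> lmeasurable"
    "emeasure lebesgue (T - (G \<union> U)) < ennreal e"
    using sets_lebesgue_outer_open[OF _ assms, of "G \<union> U"] G U by blast
  have "emeasure lebesgue (T \<inter> {0<..<1}) \<le> emeasure lebesgue ((G \<union> U) \<union> (T - (G \<union> U)))"
    using G U T(1) by (intro emeasure_mono) auto
  also have "\<dots> \<le> emeasure lebesgue (G \<union> U) + emeasure lebesgue (T - (G \<union> U))"
    using G U T(3) by (intro emeasure_subadditive) auto
  also have "\<dots> \<le> emeasure lebesgue G + ennreal e"
    unfolding emGU using T(4) by (intro add_left_mono less_imp_le)
  finally have "emeasure lebesgue (T \<inter> {0<..<1}) \<le> emeasure lebesgue G + ennreal e" .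
  with T(1,2) show ?thesis
    by (intro that[of "T \<inter> {0<..<1}"]) (auto simp: U_def G_def superlevel_def)
qed

definition \<nu> :: "real set \<Rightarrow> ennreal" where
  "\<nu> S = set_nn_integral lebesgue S (\<lambda>x. ennreal (\<phi> x))"

lemma \<nu>_mono: "S \<subseteq> T \<Longrightarrow> \<nu> S \<le> \<nu> T"
  unfolding \<nu>_def by (intro nn_integral_mono) (auto simp: indicator_def)

lemma \<nu>_eq_emeasure_density:
  assumes "S \<in> sets lebesgue" "S \<subseteq> {0<..<1}"
  shows "\<nu> S = emeasure (density lebesgue (\<lambda>x. ennreal (indicator {0<..<1} x * \<phi> x))) S"
proof -
  have "(\<lambda>x. indicator {0<..<1} x * \<phi> x) \<in> borel_measurable lebesgue"
    using measurable_weight by (simp add: set_borel_measurable_def)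
  then have "emeasure (density lebesgue (\<lambda>x. ennreal (indicator {0<..<1} x * \<phi> x))) S
      = (\<integral>\<^sup>+x. ennreal (indicator {0<..<1} x * \<phi> x) * indicator S x \<partial>lebesgue)"
    using assms(1) by (intro emeasure_density) auto
  also have "\<dots> = \<nu> S"
    unfolding \<nu>_def using assms(2) by (intro nn_integral_cong) (auto simp: indicator_def)
  finally show ?thesis ..
qed

lemma \<mu>_borel_measurable: "(\<lambda>y. ennreal (\<mu> y)) \<in> borel_measurable lborel"
proof -
  have "mono (\<lambda>y. - \<mu> y)"
    by (auto simp: mono_def intro: \<mu>_antimono)
  then have "(\<lambda>y. - (- \<mu> y)) \<in> borel_measurable borel"
    by (intro borel_measurable_uminus borel_measurable_mono)
  then show ?thesis
    by simp
qed

lemma \<nu>_superlevel_eq: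
  assumes "0 \<le> L"
  shows "\<nu> (superlevel L) = ennreal (L * \<mu> L) + (\<integral>\<^sup>+y\<in>{L..}. ennreal (\<mu> y) \<partial>lborel)"
proof -
  have "set_borel_measurable lebesgue (superlevel L) \<phi>"
    by (rule set_borel_measurable_subset[OF measurable_weight
          fmeasurableD[OF superlevel_lmeasurable] superlevel_subset])
  then have "\<nu> (superlevel L) = (\<integral>\<^sup>+y. emeasure lebesgue {x\<in>superlevel L. 0 \<le> y \<and> y < \<phi> x} \<partial>lborel)"
    unfolding \<nu>_def using positive by (intro set_nn_integral_layer_cake) (auto simp: superlevel_def less_imp_le)
  also have "\<dots> = (\<integral>\<^sup>+y. ennreal (\<mu> L) * indicator {0..<L} y + ennreal (\<mu> y) * indicator {L..} y \<partial>lborel)"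
  proof (intro nn_integral_cong)
    fix y :: real
    show "emeasure lebesgue {x\<in>superlevel L. 0 \<le> y \<and> y < \<phi> x}
        = ennreal (\<mu> L) * indicator {0..<L} y + ennreal (\<mu> y) * indicator {L..} y"
    proof (cases "0 \<le> y")
      case True
      then have "{x\<in>superlevel L. 0 \<le> y \<and> y < \<phi> x} = superlevel (max L y)"
        by (auto simp: superlevel_def)
      then have "emeasure lebesgue {x\<in>superlevel L. 0 \<le> y \<and> y < \<phi> x} = ennreal (\<mu> (max L y))"
        by (simp only: emeasure_superlevel)
      then show ?thesis
        using True by (auto simp: indicator_def max_def)
    next
      case False
      then show ?thesis
        using assms by (auto simp: indicator_def)
    qed
  qed
  also have "\<dots> = (\<integral>\<^sup>+y. ennreal (\<mu> L) * indicator {0..<L} y \<partial>lborel) + (\<integral>\<^sup>+y\<in>{L..}. ennreal (\<mu> y) \<partial>lborel)"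
    using \<mu>_borel_measurable by (intro nn_integral_add) auto
  also have "(\<integral>\<^sup>+y. ennreal (\<mu> L) * indicator {0..<L} y \<partial>lborel) = ennreal (\<mu> L) * ennreal L"
    using assms by (simp add: nn_integral_cmult_indicator)
  also have "ennreal (\<mu> L) * ennreal L = ennreal (L * \<mu> L)"
    using assms \<mu>_nonneg by (simp add: ennreal_mult' mult.commute)
  finally show ?thesis .
qed

lemma emeasure_decr_rearr_superlevel_le:
  assumes "I \<subseteq> {0<..<1}" "I \<subseteq> {a..b}" "0 \<le> a" "0 < b" "\<mu> y \<le> b"
  shows "emeasure lebesgue {x\<in>I. 0 \<le> y \<and> y < decr_rearr \<phi> x} \<le> ennreal ((b - a) / b * \<mu> y)"
proof -
  have "{x\<in>I. 0 \<le> y \<and> y < decr_rearr \<phi> x} \<subseteq> {a..\<mu> y}"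
  proof
    fix x assume x: "x \<in> {x\<in>I. 0 \<le> y \<and> y < decr_rearr \<phi> x}"
    then have "0 < x" "x \<le> 1" "a \<le> x"
      using assms(1,2) by auto
    then show "x \<in> {a..\<mu> y}"
      using le_\<mu>_if_less_decr_rearr[of x y] x by auto
  qed
  then have "emeasure lebesgue {x\<in>I. 0 \<le> y \<and> y < decr_rearr \<phi> x} \<le> emeasure lebesgue {a..\<mu> y}"
    by (intro emeasure_mono) auto
  also have "\<dots> \<le> ennreal ((b - a) / b * \<mu> y)"
  proof (cases "a \<le> \<mu> y")
    case True
    have "a * \<mu> y \<le> a * b"
      using assms(5,3) by (rule mult_left_mono)
    then have "(\<mu> y - a) * b \<le> (b - a) * \<mu> y"
      by (simp add: algebra_simps)
    then have "\<mu> y - a \<le> (b - a) / b * \<mu> y"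
      using assms(4) by (simp add: field_simps)
    then show ?thesis
      using True by (simp add: ennreal_leI)
  qed simp
  finally show ?thesis .
qed

lemma set_borel_measurable_decr_rearr:
  assumes "is_interval I" "I \<subseteq> {0<..<1}"
  shows "set_borel_measurable lebesgue I (decr_rearr \<phi>)"
proof -
  have "antimono_on I (decr_rearr \<phi>)"
    using assms(2) by (auto simp: monotone_on_def subset_eq intro!: decr_rearr_antimono)
  then show ?thesis
    using assms(1) by (rule set_borel_measurable_antimono_on)
qed

lemma emeasure_decr_rearr_level_le:
  assumes I: "is_interval I" "I \<subseteq> {0<..<1}" "0 < measure lebesgue I" and "\<mu> L \<le> Sup I"
  shows "emeasure lebesgue {x\<in>I. 0 \<le> y \<and> y < decr_rearr \<phi> x}
    \<le> ennreal (measure lebesgue I) * indicator {0..<L} y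
      + ennreal (measure lebesgue I / Sup I) * (ennreal (\<mu> y) * indicator {L..} y)"
proof -
  note ab = unit_subinterval_Inf_Sup[OF I]
  consider "y < 0" | "0 \<le> y" "y < L" | "L \<le> y"
    by linarith
  then show ?thesis
  proof cases
    case 2
    have "emeasure lebesgue {x\<in>I. 0 \<le> y \<and> y < decr_rearr \<phi> x} \<le> emeasure lebesgue I"
      using lmeasurable_unit_subinterval[OF I(1,2)] by (intro emeasure_mono) auto
    also have "\<dots> = ennreal (measure lebesgue I)"
      using lmeasurable_unit_subinterval[OF I(1,2)] by (simp add: emeasure_eq_measure2)
    moreover have "indicator {0..<L} y = (1::ennreal)" "indicator {L..} y = (0::ennreal)"
      using 2 by auto
    ultimately show ?thesis
      by (simp only: mult_zero_right mult_1_right add_0_right)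
  next
    case 3
    then have "\<mu> y \<le> Sup I"
      using \<mu>_antimono[of L y] assms(4) by linarith
    then have "emeasure lebesgue {x\<in>I. 0 \<le> y \<and> y < decr_rearr \<phi> x}
        \<le> ennreal ((Sup I - Inf I) / Sup I * \<mu> y)"
      using I(2) ab by (intro emeasure_decr_rearr_superlevel_le) auto
    also have "\<dots> = ennreal (measure lebesgue I / Sup I) * ennreal (\<mu> y)"
      unfolding ab(5) using ab \<mu>_nonneg[of y] by (intro ennreal_mult) auto
    moreover have "indicator {0..<L} y = (0::ennreal)" "indicator {L..} y = (1::ennreal)"
      using 3 by auto
    ultimately show ?thesis
      by (simp only: mult_zero_right mult_1_right add_0_left)
  qed simp
qed

end

locale A1_weight_on_unit_interval = positive_weight_on_unit_interval +
  fixes c :: real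
  assumes c_ge_1: "1 \<le> c"
    and A1: "A1_cond c \<phi>"
begin

lemma A1_interval:
  assumes "is_interval I" "I \<subseteq> {0<..<1}" "0 < measure lebesgue I"
  shows "\<nu> I / ennreal (measure lebesgue I) \<le> ennreal c * ess_inf_on \<phi> I"
  using A1 assms unfolding A1_cond_def \<nu>_def by blast

lemma \<nu>_interval_le:
  assumes I: "is_interval I" "I \<subseteq> {0<..<1}" and "0 \<le> L"
    and A: "A \<in> sets lebesgue" "A \<subseteq> I \<inter> sublevel L" "emeasure lebesgue A \<noteq> 0"
  shows "\<nu> I \<le> ennreal (c * L) * emeasure lebesgue I"
proof -
  have "I \<in> lmeasurable"
    using I by (rule lmeasurable_unit_subinterval)
  then have emI: "emeasure lebesgue I = ennreal (measure lebesgue I)"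
    by (simp add: emeasure_eq_measure2)
  have "emeasure lebesgue A \<le> emeasure lebesgue I"
    using A(2) \<open>I \<in> lmeasurable\<close> by (intro emeasure_mono) auto
  then have "measure lebesgue I \<noteq> 0"
    using A(3) emI by auto
  then have pos: "0 < measure lebesgue I"
    using measure_nonneg[of lebesgue I] by linarith
  have "\<nu> I / ennreal (measure lebesgue I) \<le> ennreal c * ess_inf_on \<phi> I"
    using I pos by (rule A1_interval)
  also have "\<dots> \<le> ennreal c * ennreal L"
    using A by (intro mult_left_mono ess_inf_on_le[OF A(1) _ A(3)]) (auto simp: sublevel_def)
  also have "\<dots> = ennreal (c * L)"
    using c_ge_1 \<open>0 \<le> L\<close> by (simp add: ennreal_mult)
  finally have avg: "\<nu> I / ennreal (measure lebesgue I) \<le> ennreal (c * L)" .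
  have "\<nu> I = \<nu> I / ennreal (measure lebesgue I) * ennreal (measure lebesgue I)"
    using pos by (simp add: ennreal_divide_times)
  also have "\<dots> \<le> ennreal (c * L) * ennreal (measure lebesgue I)"
    by (intro mult_right_mono avg) auto
  finally show ?thesis
    using emI by simp
qed

text \<open>Every ball around \<open>p\<close> meets \<open>{\<phi> \<le> L}\<close> in positive measure, so \<open>\<nu>_interval_le\<close> applies to
  \<open>C\<close> enlarged by an arbitrarily small ball around \<open>p\<close>.\<close>
lemma \<nu>_interval_le_at_closure_point:
  assumes C: "is_interval C" "C \<subseteq> {0<..<1}" and "0 \<le> L"
    and p: "p \<in> closure C" "p \<notin> locally_null_points (sublevel L)"
  shows "\<nu> C \<le> ennreal (c * L) * emeasure lebesgue C"
proof (rule ennreal_le_mult_epsilon)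
  show "0 \<le> c * L"
    using c_ge_1 \<open>0 \<le> L\<close> by simp
  fix d :: real assume "0 < d"
  define B where "B = ball p (d / 2)"
  define C' where "C' = (C \<union> B) \<inter> {0<..<1}"
  obtain y where "y \<in> C" "dist y p < d / 2"
    using p(1) \<open>0 < d\<close> closure_approachable half_gt_zero by blast
  then have "connected (C \<union> B)"
    using C(1) unfolding B_def
    by (intro connected_Un) (auto simp: is_interval_connected_1[symmetric] dist_commute is_interval_ball_real)
  then have "is_interval C'"
    unfolding C'_def by (intro is_interval_Int) (auto simp: is_interval_connected_1)
  then have C': "is_interval C'" "C' \<subseteq> {0<..<1}"
    by (auto simp: C'_def)
  have "B \<inter> sublevel L \<notin> null_sets lebesgue"
    using p(2) \<open>0 < d\<close> by (auto simp: locally_null_points_def B_def)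
  moreover have meas: "B \<inter> sublevel L \<in> sets lebesgue"
    using sublevel_lmeasurable by (auto simp: B_def)
  ultimately have pos: "emeasure lebesgue (B \<inter> sublevel L) \<noteq> 0"
    by auto
  have \<nu>C': "\<nu> C' \<le> ennreal (c * L) * emeasure lebesgue C'"
    by (intro \<nu>_interval_le[OF C' \<open>0 \<le> L\<close> meas _ pos]) (auto simp: C'_def B_def sublevel_def)
  have C_meas: "C \<in> sets lebesgue"
    using lmeasurable_unit_subinterval[OF C] by auto
  have "emeasure lebesgue C' \<le> emeasure lebesgue (C \<union> B)"
    using C_meas by (intro emeasure_mono) (auto simp: C'_def B_def)
  also have "\<dots> \<le> emeasure lebesgue C + emeasure lebesgue B"
    using C_meas by (intro emeasure_subadditive) (auto simp: B_def)
  also have "emeasure lebesgue B = ennreal d"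
    using \<open>0 < d\<close> by (simp add: B_def ball_eq_greaterThanLessThan)
  finally have C'_le: "emeasure lebesgue C' \<le> emeasure lebesgue C + ennreal d" .
  have "\<nu> C \<le> \<nu> C'"
    using C(2) by (intro \<nu>_mono) (auto simp: C'_def)
  also note \<nu>C'
  also have "ennreal (c * L) * emeasure lebesgue C' \<le> ennreal (c * L) * (emeasure lebesgue C + ennreal d)"
    using C'_le by (rule mult_left_mono) simp
  finally show "\<nu> C \<le> ennreal (c * L) * (emeasure lebesgue C + ennreal d)" .
qed

lemma \<nu>_component_le:
  assumes "0 \<le> L" "sublevel L \<notin> null_sets lebesgue"
    and W: "open W" "locally_null_points (sublevel L) \<inter> {0<..<1} \<subseteq> W" "W \<subseteq> {0<..<1}"
    and C: "C \<in> components W"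
  shows "\<nu> C \<le> ennreal (c * L) * emeasure lebesgue C"
proof -
  have "C \<subseteq> W" "connected C"
    using C in_components_subset in_components_connected by blast+
  then have C_int: "is_interval C" "C \<subseteq> {0<..<1}"
    using W(3) by (auto simp: is_interval_connected_1)
  obtain p where "p \<in> closure C" "p \<notin> locally_null_points (sublevel L)"
  proof (cases "C \<subseteq> locally_null_points (sublevel L)")
    case False
    then show ?thesis
      using that closure_subset by blast
  next
    case True
    have "C \<noteq> {0<..<1}"
    proof
      assume "C = {0<..<1}"
      then have "sublevel L \<subseteq> locally_null_points (sublevel L) \<inter> sublevel L"
        using True by (auto simp: sublevel_def)
      then show False
        using assms(2) locally_null_points_Int_null null_sets_completion_subset by blast
    qed
    then obtain p where "p \<in> closure C" "p \<in> {0<..<1}" "p \<notin> W"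
      using closure_component_meets_complement[OF connected_Ioo W(1,3) C] by blast
    then show ?thesis
      using that W(2) by blast
  qed
  then show ?thesis
    using \<nu>_interval_le_at_closure_point[OF C_int \<open>0 \<le> L\<close>] by blast
qed

lemma \<nu>_open_le:
  assumes "0 \<le> L" "sublevel L \<notin> null_sets lebesgue"
    and W: "open W" "locally_null_points (sublevel L) \<inter> {0<..<1} \<subseteq> W" "W \<subseteq> {0<..<1}"
  shows "\<nu> W \<le> ennreal (c * L) * emeasure lebesgue W"
proof -
  define D where "D = density lebesgue (\<lambda>x. ennreal (indicator {0<..<1} x * \<phi> x))"
  have C: "C \<in> sets lebesgue" "C \<subseteq> {0<..<1}" if "C \<in> components W" for C
    using open_components[OF W(1) that] in_components_subset[OF that] W(3) by auto
  have "\<nu> W = emeasure D W"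
    using W by (simp add: D_def \<nu>_eq_emeasure_density)
  also have "\<dots> = (\<integral>\<^sup>+C. emeasure D C \<partial>count_space (components W))"
    using W(1) by (rule emeasure_open_eq_components) (simp add: D_def)
  also have "\<dots> = (\<integral>\<^sup>+C. \<nu> C \<partial>count_space (components W))"
    using C by (intro nn_integral_cong) (simp add: D_def \<nu>_eq_emeasure_density)
  also have "\<dots> \<le> (\<integral>\<^sup>+C. ennreal (c * L) * emeasure lebesgue C \<partial>count_space (components W))"
    using \<nu>_component_le[OF assms] by (intro nn_integral_mono) simp
  also have "\<dots> = ennreal (c * L) * (\<integral>\<^sup>+C. emeasure lebesgue C \<partial>count_space (components W))"
    by (rule nn_integral_cmult) simp
  also have "(\<integral>\<^sup>+C. emeasure lebesgue C \<partial>count_space (components W)) = emeasure lebesgue W"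
    using W(1) by (rule emeasure_open_eq_components[symmetric]) simp
  finally show ?thesis .
qed

lemma \<nu>_superlevel_le_if_sublevel_not_null:
  assumes "0 \<le> L" "sublevel L \<notin> null_sets lebesgue"
  shows "\<nu> (superlevel L) \<le> ennreal (c * L) * emeasure lebesgue (superlevel L)"
proof (rule ennreal_le_mult_epsilon)
  show "0 \<le> c * L"
    using c_ge_1 assms(1) by simp
  fix e :: real assume "0 < e"
  then obtain W where W: "open W" "locally_null_points (sublevel L) \<inter> {0<..<1} \<subseteq> W" "W \<subseteq> {0<..<1}"
    and "superlevel L \<subseteq> W" "emeasure lebesgue W \<le> emeasure lebesgue (superlevel L) + ennreal e"
    by (rule superlevel_open_cover)
  have "\<nu> (superlevel L) \<le> \<nu> W"
    using \<open>superlevel L \<subseteq> W\<close> by (rule \<nu>_mono)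
  also have "\<dots> \<le> ennreal (c * L) * emeasure lebesgue W"
    by (rule \<nu>_open_le[OF assms W])
  also have "\<dots> \<le> ennreal (c * L) * (emeasure lebesgue (superlevel L) + ennreal e)"
    using \<open>emeasure lebesgue W \<le> _\<close> by (rule mult_left_mono) simp
  finally show "\<nu> (superlevel L) \<le> ennreal (c * L) * (emeasure lebesgue (superlevel L) + ennreal e)" .
qed

lemma \<nu>_superlevel_le:
  assumes "0 \<le> L" "ess_inf_on \<phi> {0<..<1} \<le> ennreal L"
  shows "\<nu> (superlevel L) \<le> ennreal (c * L) * ennreal (\<mu> L)"
proof (cases "sublevel L \<in> null_sets lebesgue")
  case True
  then have "\<mu> L = 1"
    using measure_sublevel[of L] null_setsD1[OF True] by (simp add: measure_def)
  have "\<nu> {0<..<1} / ennreal (measure lebesgue {0<..<1::real}) \<le> ennreal c * ess_inf_on \<phi> {0<..<1}"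
    by (intro A1_interval) (auto simp: is_interval_oo)
  then have "\<nu> {0<..<1} \<le> ennreal c * ess_inf_on \<phi> {0<..<1}"
    by (simp add: divide_ennreal_def)
  also have "\<dots> \<le> ennreal c * ennreal L"
    using assms(2) by (rule mult_left_mono) simp
  finally have "\<nu> (superlevel L) \<le> ennreal c * ennreal L"
    using \<nu>_mono[OF superlevel_subset] order_trans by blast
  then show ?thesis
    using \<open>\<mu> L = 1\<close> c_ge_1 assms(1) by (simp add: ennreal_mult)
next
  case False
  then show ?thesis
    using \<nu>_superlevel_le_if_sublevel_not_null[OF assms(1)] by (simp add: emeasure_superlevel)
qed

lemma \<mu>_tail_le:
  assumes "0 \<le> L" "ess_inf_on \<phi> {0<..<1} \<le> ennreal L"
  shows "(\<integral>\<^sup>+y\<in>{L..}. ennreal (\<mu> y) \<partial>lborel) \<le> ennreal ((c - 1) * L * \<mu> L)"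
proof -
  have "(\<integral>\<^sup>+y\<in>{L..}. ennreal (\<mu> y) \<partial>lborel) + ennreal (L * \<mu> L) \<le> ennreal (c * L * \<mu> L)"
    using \<nu>_superlevel_eq[OF assms(1)] \<nu>_superlevel_le[OF assms] c_ge_1 assms(1) \<mu>_nonneg
    by (simp add: add.commute ennreal_mult)
  then have "(\<integral>\<^sup>+y\<in>{L..}. ennreal (\<mu> y) \<partial>lborel) \<le> ennreal (c * L * \<mu> L) - ennreal (L * \<mu> L)"
    by (simp add: ennreal_le_minus_iff)
  also have "\<dots> = ennreal ((c - 1) * L * \<mu> L)"
    using assms(1) \<mu>_nonneg by (simp add: ennreal_minus algebra_simps)
  finally show ?thesis .
qed

lemma set_nn_integral_decr_rearr_le:
  assumes I: "is_interval I" "I \<subseteq> {0<..<1}" "0 < measure lebesgue I"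
  shows "set_nn_integral lebesgue I (\<lambda>x. ennreal (decr_rearr \<phi> x))
           \<le> ennreal (c * decr_rearr \<phi> (Sup I) * measure lebesgue I)"
proof -
  define m b where "m = measure lebesgue I" and "b = Sup I"
  define L where "L = decr_rearr \<phi> b"
  have "0 < b" "b \<le> 1"
    using unit_subinterval_Inf_Sup[OF I] by (auto simp: b_def)
  then have "0 \<le> L" "\<mu> L \<le> b"
    by (auto simp: L_def decr_rearr_nonneg \<mu>_decr_rearr_le)
  have tail: "(\<integral>\<^sup>+y\<in>{L..}. ennreal (\<mu> y) \<partial>lborel) \<le> ennreal ((c - 1) * L * b)"
  proof -
    have "(\<integral>\<^sup>+y\<in>{L..}. ennreal (\<mu> y) \<partial>lborel) \<le> ennreal ((c - 1) * L * \<mu> L)"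
      using \<open>0 < b\<close> \<open>b \<le> 1\<close> \<open>0 \<le> L\<close> by (intro \<mu>_tail_le) (auto simp: L_def ess_inf_le_decr_rearr)
    also have "\<dots> \<le> ennreal ((c - 1) * L * b)"
      using c_ge_1 \<open>0 \<le> L\<close> \<open>\<mu> L \<le> b\<close> by (intro ennreal_leI mult_left_mono) auto
    finally show ?thesis .
  qed
  have nonneg: "0 \<le> decr_rearr \<phi> x" if "x \<in> I" for x
    using that I(2) decr_rearr_nonneg[of x] by auto
  have "set_nn_integral lebesgue I (\<lambda>x. ennreal (decr_rearr \<phi> x))
      = (\<integral>\<^sup>+y. emeasure lebesgue {x\<in>I. 0 \<le> y \<and> y < decr_rearr \<phi> x} \<partial>lborel)"
    by (rule set_nn_integral_layer_cake[OF set_borel_measurable_decr_rearr[OF I(1,2)]]) (fact nonneg)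
  also have "\<dots> \<le> (\<integral>\<^sup>+y. ennreal m * indicator {0..<L} y
                        + ennreal (m / b) * (ennreal (\<mu> y) * indicator {L..} y) \<partial>lborel)"
    unfolding m_def b_def using I \<open>\<mu> L \<le> b\<close>
    by (intro nn_integral_mono emeasure_decr_rearr_level_le) (auto simp: b_def)
  also have "\<dots> = ennreal m * emeasure lborel {0..<L} + ennreal (m / b) * (\<integral>\<^sup>+y\<in>{L..}. ennreal (\<mu> y) \<partial>lborel)"
    using \<mu>_borel_measurable by (simp add: nn_integral_add nn_integral_cmult nn_integral_cmult_indicator)
  also have "\<dots> \<le> ennreal (m * L) + ennreal (m / b) * ennreal ((c - 1) * L * b)"
    using \<open>0 \<le> L\<close> tail by (intro add_mono mult_left_mono) (auto simp: m_def ennreal_mult')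
  also have "ennreal (m / b) * ennreal ((c - 1) * L * b) = ennreal (m / b * ((c - 1) * L * b))"
    using \<open>0 < b\<close> \<open>0 \<le> L\<close> c_ge_1 by (intro ennreal_mult[symmetric]) (auto simp: m_def)
  also have "ennreal (m * L) + \<dots> = ennreal (m * L + m / b * ((c - 1) * L * b))"
    using \<open>0 < b\<close> \<open>0 \<le> L\<close> c_ge_1 by (intro ennreal_plus[symmetric]) (auto simp: m_def)
  also have "m * L + m / b * ((c - 1) * L * b) = c * L * m"
    using \<open>0 < b\<close> by (simp add: field_simps)
  finally show ?thesis
    by (simp add: m_def L_def b_def)
qed

lemma A1_cond_decr_rearr: "A1_cond c (decr_rearr \<phi>)"
  unfolding A1_cond_def
proof (intro allI impI, elim conjE)
  fix I :: "real set"
  assume I: "is_interval I" "I \<subseteq> {0<..<1}" "0 < measure lebesgue I"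
  define L where "L = decr_rearr \<phi> (Sup I)"
  note ab = unit_subinterval_Inf_Sup[OF I]
  have "0 \<le> L"
    unfolding L_def using ab by (intro decr_rearr_nonneg) auto
  have "ennreal L \<le> ess_inf_on (decr_rearr \<phi>) I"
  proof (rule ennreal_le_ess_inf_on)
    fix x assume "x \<in> I"
    then show "L \<le> decr_rearr \<phi> x"
      unfolding L_def using I(2) ab by (intro decr_rearr_antimono) auto
  qed
  have "set_nn_integral lebesgue I (\<lambda>x. ennreal (decr_rearr \<phi> x)) / ennreal (measure lebesgue I)
      \<le> ennreal (c * L * measure lebesgue I) / ennreal (measure lebesgue I)"
    using set_nn_integral_decr_rearr_le[OF I] by (simp add: L_def divide_right_mono_ennreal)
  also have "\<dots> = ennreal (c * L * measure lebesgue I / measure lebesgue I)"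
    using I(3) c_ge_1 \<open>0 \<le> L\<close> by (intro divide_ennreal) auto
  also have "c * L * measure lebesgue I / measure lebesgue I = c * L"
    using I(3) by simp
  also have "ennreal (c * L) = ennreal c * ennreal L"
    using c_ge_1 \<open>0 \<le> L\<close> by (simp add: ennreal_mult)
  also have "\<dots> \<le> ennreal c * ess_inf_on (decr_rearr \<phi>) I"
    using \<open>ennreal L \<le> _\<close> by (rule mult_left_mono) simp
  finally show "set_nn_integral lebesgue I (\<lambda>x. ennreal (decr_rearr \<phi> x)) / ennreal (measure lebesgue I)
      \<le> ennreal c * ess_inf_on (decr_rearr \<phi>) I" .
qed

end

theorem theorem1:
  fixes c :: real and \<phi> :: "real \<Rightarrow> real"
  assumes "c \<ge> 1"
    and "set_borel_measurable lebesgue {0<..<1} \<phi>"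
    and "\<forall>x\<in>{0<..<1}. \<phi> x > 0"
    and "A1_cond c \<phi>"
  shows "A1_cond c (decr_rearr \<phi>)"
proof -
  interpret A1_weight_on_unit_interval \<phi> c
    using assms by unfold_locales auto
  show ?thesis
    by (rule A1_cond_decr_rearr)
qed

end
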